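(* The map $R$ is uniformly DC1-chaotic: there exist an uncountable set $S\subset[0,1]$ and a constant $\bar\delta>0$ such that for all $x\ne y$ in $S$ and every $\delta>0$, $$\limsup_{n\to\infty}\frac1n\#\{0\le k\le n-1:|R^k(x)-R^k(y)|<\delta\}=1,$$ $$\liminf_{n\to\infty}\frac1n\#\{0\le k\le n-1:|R^k(x)-R^k(y)|<\bar\delta\}=0.$$
   Context: Define $\rho$ on binary words: for $b=b_1b_2\dots$, $\rho(b)$ is obtained by deleting every digit $b_n=0$ and replacing every $b_n=1$ by $0$ if $n$ is odd and by $1$ if $n$ is even. For $x\in(0,1]$ let $\beta(x)$ be the unique binary expansion of $x$ with infinitely many $1$'s. Define $R:[0,1]\to[0,1]$ by $R(0)=2/3$ and, for $x\in(0,1]$, $R(x)=\sum_{n\ge1}c_n2^{-n}$ where $c=\rho(\beta(x))$. $\#$ denotes cardinality. *)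

theory Defs
  imports Complex_Main "HOL-Library.Infinite_Set" "HOL-Library.Countable_Set"
    "HOL-Library.Extended_Real"
begin

text \<open>Binary words are modelled 0-indexed as nat \<Rightarrow> bool: the paper's digit b_(i+1)
  is b i (True = 1). Hence the paper's position n = i+1 is odd iff i is even.\<close>

text \<open>rho: delete zeros, replace the 1 at (paper) position n by 0 if n odd, 1 if n even.
  Only used on words with infinitely many ones.\<close>
definition rho :: "(nat \<Rightarrow> bool) \<Rightarrow> (nat \<Rightarrow> bool)" where
  "rho b = (\<lambda>j. odd (enumerate {i. b i} j))"

definition bin_val :: "(nat \<Rightarrow> bool) \<Rightarrow> real" where
  "bin_val b = (\<Sum>i. (if b i then 1 else 0) / 2 ^ (Suc i))"

definition beta :: "real \<Rightarrow> (nat \<Rightarrow> bool)" where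
  "beta x = (THE b. bin_val b = x \<and> infinite {i. b i})"

definition R :: "real \<Rightarrow> real" where
  "R x = (if x = 0 then 2/3 else bin_val (rho (beta x)))"

end

theory Submission
  imports Defs
begin

text \<open>
  On words with infinitely many ones, \<open>bin_val\<close> is injective, so \<open>R\<close> acts as \<open>rho\<close>.
  For a 0/1 sequence \<open>f\<close> without two consecutive ones we build words \<open>code f k\<close> with
  first digit \<open>f k\<close> and \<open>rho (code f k) = code f (Suc k)\<close>; the orbit of
  \<open>bin_val (code f 0)\<close> then lies in \<open>[1/2, 1]\<close> at the times \<open>k\<close> with \<open>f k\<close> and in
  \<open>[0, 1/4]\<close> at the other times, and two such orbits are \<open>2^-(j+1)\<close>-close at time \<open>k\<close> when
  the sequences agree on \<open>k, \<dots>, k + j\<close>.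

  Cut time into the stages \<open>[m!, (m+1)!)\<close>. For a parameter \<open>w\<close> in the Cantor space, let
  \<open>f\<close> vanish on even stages and alternate on odd stages, in a phase given by one bit of
  \<open>w\<close>, each bit being read in infinitely many stages. Two distinct parameters then give
  orbits that are close during almost all of every even stage and \<open>1/4\<close>-apart during
  infinitely many whole odd stages. Since stage \<open>m\<close> fills the fraction \<open>m/(m+1)\<close> of the
  times before \<open>(m+1)!\<close>, the density of close times has upper limit 1 and lower limit 0.
\<close>

section \<open>Densities along factorial times\<close>

lemma Limsup_ereal_eqI:
  fixes u :: "'a \<Rightarrow> real"
  assumes "\<forall>\<^sub>F x in F. u x \<le> c" and "\<And>r. r < c \<Longrightarrow> \<exists>\<^sub>F x in F. r < u x"
  shows "Limsup F (\<lambda>x. ereal (u x)) = ereal c"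
proof (rule antisym)
  show "Limsup F (\<lambda>x. ereal (u x)) \<le> ereal c"
    using assms(1) by (intro Limsup_bounded) simp
  show "ereal c \<le> Limsup F (\<lambda>x. ereal (u x))"
  proof (rule ccontr)
    assume "\<not> ereal c \<le> Limsup F (\<lambda>x. ereal (u x))"
    then obtain r where r: "Limsup F (\<lambda>x. ereal (u x)) < ereal r" "r < c"
      using ereal_dense2 by (metis ereal_less_eq(3) not_le)
    then have "\<forall>\<^sub>F x in F. u x < r"
      using Limsup_lessD by fastforce
    with assms(2)[OF r(2)] have "\<exists>\<^sub>F x in F. u x < r \<and> r < u x"
      by (rule frequently_eventually_conj)
    then show False
      by (simp add: frequently_def)
  qed
qed

lemma Liminf_ereal_eqI:
  fixes u :: "'a \<Rightarrow> real"
  assumes "\<forall>\<^sub>F x in F. c \<le> u x" and "\<And>r. c < r \<Longrightarrow> \<exists>\<^sub>F x in F. u x < r"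
  shows "Liminf F (\<lambda>x. ereal (u x)) = ereal c"
proof (rule antisym)
  show "ereal c \<le> Liminf F (\<lambda>x. ereal (u x))"
    using assms(1) by (intro Liminf_bounded) simp
  show "Liminf F (\<lambda>x. ereal (u x)) \<le> ereal c"
  proof (rule ccontr)
    assume "\<not> Liminf F (\<lambda>x. ereal (u x)) \<le> ereal c"
    then obtain r where r: "ereal r < Liminf F (\<lambda>x. ereal (u x))" "c < r"
      using ereal_dense2 by (metis ereal_less_eq(3) not_le)
    then have "\<forall>\<^sub>F x in F. r < u x"
      using less_LiminfD by fastforce
    with assms(2)[OF r(2)] have "\<exists>\<^sub>F x in F. r < u x \<and> u x < r"
      by (rule frequently_eventually_conj)
    then show False
      by (simp add: frequently_def)
  qed
qed

lemma card_filter_less_ge: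
  assumes "\<And>k. a \<le> k \<Longrightarrow> k + j < b \<Longrightarrow> P k"
  shows "b \<le> card {k. k < b \<and> P k} + a + j"
proof -
  have "card {a..<b - j} \<le> card {k. k < b \<and> P k}"
    using assms by (intro card_mono) auto
  then show ?thesis by simp
qed

lemma card_filter_less_le:
  assumes "\<And>k. a \<le> k \<Longrightarrow> k < b \<Longrightarrow> \<not> P k"
  shows "card {k. k < b \<and> P k} \<le> a"
proof -
  have "card {k. k < b \<and> P k} \<le> card {..<a}"
    using assms by (intro card_mono) (auto simp: not_less[symmetric])
  then show ?thesis by simp
qed

lemma real_fact_Suc: "real (fact (Suc m)) = real (Suc m) * real (fact m)"
  by (simp only: fact_Suc of_nat_mult of_nat_id)

lemma density_fact_Suc_ge:
  assumes "fact (Suc m) \<le> c + fact m + j"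
  shows "1 - real (Suc j) / real (Suc m) \<le> real c / real (fact (Suc m))"
proof -
  define F where "F = real (fact m :: nat)"
  have "1 \<le> F"
    by (simp add: F_def)
  have "real (Suc m) * F \<le> real c + F + real j"
    using of_nat_mono[OF assms, where 'a=real] unfolding F_def real_fact_Suc by (simp only: of_nat_add)
  moreover have "real j \<le> real j * F"
    using \<open>1 \<le> F\<close> by (simp add: mult_le_cancel_left1)
  ultimately have "(real (Suc m) - real (Suc j)) * F \<le> real c"
    by (simp add: algebra_simps)
  then have "(real (Suc m) - real (Suc j)) * F / (real (Suc m) * F) \<le> real c / (real (Suc m) * F)"
    using \<open>1 \<le> F\<close> by (intro divide_right_mono) simp_all
  moreover have "(real (Suc m) - real (Suc j)) * F / (real (Suc m) * F) = 1 - real (Suc j) / real (Suc m)"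
    using \<open>1 \<le> F\<close> by (simp only: nonzero_mult_divide_mult_cancel_right diff_divide_distrib)
      (simp del: of_nat_Suc)
  ultimately show ?thesis
    unfolding real_fact_Suc F_def[symmetric] by linarith
qed

lemma density_fact_Suc_le:
  assumes "c \<le> fact m"
  shows "real c / real (fact (Suc m)) \<le> 1 / real (Suc m)"
proof -
  have "real c / real (fact (Suc m)) \<le> real (fact m) / real (fact (Suc m))"
    using of_nat_mono[OF assms, where 'a=real] by (intro divide_right_mono) simp_all
  also have "\<dots> = 1 / real (Suc m)"
    unfolding real_fact_Suc by (rule nonzero_divide_mult_cancel_right) simp
  finally show ?thesis .
qed

lemma density_le_1: "real (card {k. k < n \<and> P k}) / real n \<le> 1"
proof -
  have "card {k. k < n \<and> P k} \<le> card {..<n}"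
    by (intro card_mono) auto
  then show ?thesis
    by (cases "n = 0") (simp_all add: divide_le_eq_1)
qed

lemma frequently_sequentially_reindex:
  assumes "\<And>m. m \<le> g m" and "\<exists>\<^sub>F m in sequentially. P (g m)"
  shows "\<exists>\<^sub>F n in sequentially. P n"
  unfolding frequently_sequentially
proof
  fix N
  obtain m where "N \<le> m" "P (g m)"
    using assms(2) unfolding frequently_sequentially by blast
  then show "\<exists>n\<ge>N. P n"
    using assms(1)[of m] le_trans by blast
qed

lemma frequently_density_gt:
  assumes "\<exists>\<^sub>F m in sequentially. fact (Suc m) \<le> card {k. k < fact (Suc m) \<and> P k} + fact m + j"
    and "r < 1"
  shows "\<exists>\<^sub>F n in sequentially. r < real (card {k. k < n \<and> P k}) / real n"
proof -
  have "(\<lambda>m. real (Suc j) / real (Suc m)) \<longlonglongrightarrow> 0"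
    by (rule LIMSEQ_Suc[OF lim_const_over_n])
  then have "\<forall>\<^sub>F m in sequentially. real (Suc j) / real (Suc m) < 1 - r"
    using \<open>r < 1\<close> by (intro order_tendstoD(2)) auto
  with assms(1) have "\<exists>\<^sub>F m in sequentially. r < real (card {k. k < fact (Suc m) \<and> P k}) / real (fact (Suc m))"
  proof (rule frequently_eventually_conj[THEN frequently_elim1])
    fix m assume m: "real (Suc j) / real (Suc m) < 1 - r \<and>
      fact (Suc m) \<le> card {k. k < fact (Suc m) \<and> P k} + fact m + j"
    show "r < real (card {k. k < fact (Suc m) \<and> P k}) / real (fact (Suc m))"
      using m density_fact_Suc_ge[OF conjunct2[OF m]] by linarith
  qed
  then show ?thesis
    by (rule frequently_sequentially_reindex[rotated]) (rule Suc_leD[OF fact_ge_self])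
qed

lemma frequently_density_lt:
  assumes "\<exists>\<^sub>F m in sequentially. card {k. k < fact (Suc m) \<and> P k} \<le> fact m"
    and "0 < r"
  shows "\<exists>\<^sub>F n in sequentially. real (card {k. k < n \<and> P k}) / real n < r"
proof -
  have "(\<lambda>m. 1 / real (Suc m)) \<longlonglongrightarrow> 0"
    by (rule LIMSEQ_Suc[OF lim_const_over_n])
  then have "\<forall>\<^sub>F m in sequentially. 1 / real (Suc m) < r"
    using \<open>0 < r\<close> by (intro order_tendstoD(2)) auto
  with assms(1) have "\<exists>\<^sub>F m in sequentially. real (card {k. k < fact (Suc m) \<and> P k}) / real (fact (Suc m)) < r"
  proof (rule frequently_eventually_conj[THEN frequently_elim1])
    fix m assume m: "1 / real (Suc m) < r \<and> card {k. k < fact (Suc m) \<and> P k} \<le> fact m"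
    show "real (card {k. k < fact (Suc m) \<and> P k}) / real (fact (Suc m)) < r"
      using m density_fact_Suc_le[OF conjunct2[OF m]] by linarith
  qed
  then show ?thesis
    by (rule frequently_sequentially_reindex[rotated]) (rule Suc_leD[OF fact_ge_self])
qed

section \<open>Binary expansions\<close>

definition bin_digit :: "(nat \<Rightarrow> bool) \<Rightarrow> nat \<Rightarrow> real" where
  "bin_digit b i = (if b i then 1 else 0) / 2 ^ Suc i"

lemma bin_val_eq_suminf: "bin_val b = suminf (bin_digit b)"
  unfolding bin_val_def bin_digit_def[abs_def] ..

lemma bin_digit_nonneg: "0 \<le> bin_digit b i"
  by (simp add: bin_digit_def)

lemma bin_digit_le: "bin_digit b i \<le> (1/2) ^ Suc i"
  by (simp add: bin_digit_def power_one_over)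

lemma summable_bin_digit: "summable (bin_digit b)"
  by (rule summable_comparison_test'[OF sums_summable[OF power_half_series], of 0])
    (metis abs_of_nonneg bin_digit_le bin_digit_nonneg real_norm_def)

lemma bin_val_nonneg: "0 \<le> bin_val b"
  unfolding bin_val_eq_suminf by (rule suminf_nonneg[OF summable_bin_digit bin_digit_nonneg])

lemma bin_val_le_1: "bin_val b \<le> 1"
proof -
  have "suminf (bin_digit b) \<le> (\<Sum>i. (1/2) ^ Suc i)"
    by (rule suminf_le[OF bin_digit_le summable_bin_digit sums_summable[OF power_half_series]])
  then show ?thesis
    by (simp only: bin_val_eq_suminf sums_unique[OF power_half_series, symmetric])
qed

lemma bin_val_shift: "bin_val b = (\<Sum>i<n. bin_digit b i) + bin_val (\<lambda>i. b (i + n)) / 2 ^ n"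
proof -
  have "(\<lambda>i. bin_digit b (i + n)) = (\<lambda>i. bin_digit (\<lambda>i. b (i + n)) i / 2 ^ n)"
    by (simp add: bin_digit_def power_add mult.assoc)
  then have "(\<Sum>i. bin_digit b (i + n)) = bin_val (\<lambda>i. b (i + n)) / 2 ^ n"
    by (simp add: bin_val_eq_suminf suminf_divide summable_bin_digit)
  then show ?thesis
    using suminf_split_initial_segment[OF summable_bin_digit, of b n] by (simp add: bin_val_eq_suminf)
qed

lemma bin_val_ge_half: "b 0 \<Longrightarrow> 1/2 \<le> bin_val b"
  using bin_val_shift[of b 1] bin_val_nonneg[of "\<lambda>i. b (i + 1)"] by (simp add: bin_digit_def)

lemma bin_val_le_quarter: "\<not> b 0 \<Longrightarrow> \<not> b 1 \<Longrightarrow> bin_val b \<le> 1/4"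
  using bin_val_shift[of b 2] bin_val_le_1[of "\<lambda>i. b (i + 2)"]
  by (simp add: bin_digit_def numeral_2_eq_2)

lemma bin_val_dist_le:
  assumes "\<forall>i<n. b i = c i"
  shows "\<bar>bin_val b - bin_val c\<bar> \<le> 1 / 2 ^ n"
proof -
  have "(\<Sum>i<n. bin_digit b i) = (\<Sum>i<n. bin_digit c i)"
    using assms by (simp add: bin_digit_def)
  then have "bin_val b - bin_val c = (bin_val (\<lambda>i. b (i + n)) - bin_val (\<lambda>i. c (i + n))) / 2 ^ n"
    using bin_val_shift[of b n] bin_val_shift[of c n] by (simp add: diff_divide_distrib)
  moreover have "\<bar>bin_val (\<lambda>i. b (i + n)) - bin_val (\<lambda>i. c (i + n))\<bar> \<le> 1"
    using bin_val_nonneg[of "\<lambda>i. b (i + n)"] bin_val_le_1[of "\<lambda>i. b (i + n)"]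
      bin_val_nonneg[of "\<lambda>i. c (i + n)"] bin_val_le_1[of "\<lambda>i. c (i + n)"] by linarith
  ultimately show ?thesis
    by (simp add: abs_divide divide_right_mono)
qed

lemma bin_val_pos:
  assumes "b i"
  shows "0 < bin_val b"
proof -
  have "0 < bin_digit b i"
    using assms by (simp add: bin_digit_def)
  moreover have "bin_digit b i \<le> (\<Sum>j<Suc i. bin_digit b j)"
    by (rule member_le_sum) (simp_all add: bin_digit_nonneg)
  moreover have "0 \<le> bin_val (\<lambda>j. b (j + Suc i)) / 2 ^ Suc i"
    by (simp add: bin_val_nonneg)
  ultimately show ?thesis
    using bin_val_shift[of b "Suc i"] by linarith
qed

lemma bin_val_less:
  assumes "\<forall>j<i. b j = c j" "b i" "\<not> c i" "infinite {j. b j}"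
  shows "bin_val c < bin_val b"
proof -
  obtain j where "i < j" "b j"
    using assms(4) unfolding infinite_nat_iff_unbounded by blast
  then have "0 < bin_val (\<lambda>k. b (k + Suc i)) / 2 ^ Suc i"
    using bin_val_pos[of _ "j - Suc i"] by simp
  moreover have "bin_val (\<lambda>k. c (k + Suc i)) / 2 ^ Suc i \<le> 1 / 2 ^ Suc i"
    by (simp add: bin_val_le_1 divide_right_mono)
  moreover have "(\<Sum>j<i. bin_digit b j) = (\<Sum>j<i. bin_digit c j)"
    using assms(1) by (simp add: bin_digit_def)
  ultimately show ?thesis
    using bin_val_shift[of b "Suc i"] bin_val_shift[of c "Suc i"] assms(2,3)
    by (simp add: bin_digit_def)
qed

lemma bin_val_inj:
  assumes "infinite {i. b i}" "infinite {i. c i}" "bin_val b = bin_val c"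
  shows "b = c"
proof (rule ccontr)
  assume "b \<noteq> c"
  then obtain i where "b i \<noteq> c i" "\<forall>j<i. b j = c j"
    using exists_least_iff[of "\<lambda>i. b i \<noteq> c i"] by (auto simp: fun_eq_iff)
  then show False
    using bin_val_less[of i b c] bin_val_less[of i c b] assms by (cases "b i") auto
qed

lemma beta_bin_val: "infinite {i. b i} \<Longrightarrow> beta (bin_val b) = b"
  unfolding beta_def by (rule the_equality) (auto dest: bin_val_inj)

lemma enumerate_range_strict_mono:
  fixes g :: "nat \<Rightarrow> 'a::wellorder"
  assumes "strict_mono g"
  shows "enumerate (range g) n = g n"
proof (induction n)
  case 0
  show ?case
    unfolding enumerate_0 by (rule Least_equality) (auto simp: strict_mono_less_eq[OF assms])
next
  case (Suc n)
  have inf: "infinite (range g)"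
    using assms strict_mono_imp_inj_on range_inj_infinite by blast
  show ?case
    unfolding enumerate_Suc''[OF inf] Suc
    by (rule Least_equality)
      (use assms in \<open>auto simp: strict_mono_less strict_mono_less_eq Suc_le_eq\<close>)
qed

section \<open>Words with a prescribed orbit under \<open>rho\<close>\<close>

text \<open>
  \<open>code f k\<close> starts with the block \<open>10\<close> if \<open>f k\<close>, and otherwise with \<open>0001\<close> or \<open>0010\<close>
  according to \<open>f (Suc k)\<close>; every further digit \<open>j \<ge> 1\<close> of \<open>code f (Suc k)\<close> follows as
  the pair \<open>01\<close> (digit 1) or \<open>10\<close> (digit 0). As \<open>rho\<close> reads the parity of the positions
  of the ones and the blocks have even length, \<open>rho (code f k) = code f (Suc k)\<close> as soon
  as \<open>f\<close> has no two consecutive ones.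
\<close>

definition block_len :: "bool \<Rightarrow> nat" where
  "block_len a = (if a then 2 else 4)"

definition block_one :: "bool \<Rightarrow> bool \<Rightarrow> nat" where
  "block_one a a' = (if a then 0 else if a' then 3 else 2)"

function code :: "(nat \<Rightarrow> bool) \<Rightarrow> nat \<Rightarrow> nat \<Rightarrow> bool" where
  "code f k p =
    (if p < block_len (f k) then p = block_one (f k) (f (Suc k))
     else code f (Suc k) ((p - block_len (f k)) div 2 + 1) = odd (p - block_len (f k)))"
  by pat_completeness auto
termination
  by (relation "measure (\<lambda>(f, k, p). p)") (auto simp: block_len_def)

declare code.simps [simp del]

lemma code_block: "p < block_len (f k) \<Longrightarrow> code f k p \<longleftrightarrow> p = block_one (f k) (f (Suc k))"
  by (simp add: code.simps)

lemma code_0: "code f k 0 = f k"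
  by (simp add: code_block block_len_def block_one_def)

lemma code_pair:
  assumes "r < 2"
  shows "code f k (block_len (f k) + 2 * j + r) \<longleftrightarrow> (code f (Suc k) (Suc j) \<longleftrightarrow> r = 1)"
  using assms by (subst code.simps) (auto simp: less_2_cases_iff)

definition one_pos :: "(nat \<Rightarrow> bool) \<Rightarrow> nat \<Rightarrow> nat \<Rightarrow> nat" where
  "one_pos f k j =
    (if j = 0 then block_one (f k) (f (Suc k))
     else block_len (f k) + 2 * (j - 1) + of_bool (code f (Suc k) j))"

lemma strict_mono_one_pos: "strict_mono (one_pos f k)"
  unfolding strict_mono_Suc_iff
  by (auto simp: one_pos_def block_one_def block_len_def)

lemma ones_code: "{i. code f k i} = range (one_pos f k)"
proof (intro equalityI subsetI)
  fix i assume "i \<in> {i. code f k i}"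
  then have i: "code f k i" by simp
  show "i \<in> range (one_pos f k)"
  proof (cases "i < block_len (f k)")
    case True
    then have "i = one_pos f k 0"
      using i by (simp add: code_block one_pos_def)
    then show ?thesis by blast
  next
    case False
    define d where "d = i - block_len (f k)"
    have i_eq: "i = block_len (f k) + 2 * (d div 2) + d mod 2"
      using False by (simp add: d_def)
    then have "code f (Suc k) (Suc (d div 2)) \<longleftrightarrow> d mod 2 = 1"
      using i code_pair[of "d mod 2" f k "d div 2"] by simp
    then have "i = one_pos f k (Suc (d div 2))"
      by (subst i_eq) (auto simp: one_pos_def mod2_eq_if)
    then show ?thesis by blast
  qed
next
  fix i assume "i \<in> range (one_pos f k)"
  then obtain j where j: "i = one_pos f k j" by blast
  show "i \<in> {i. code f k i}"
  proof (cases j)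
    case 0
    then show ?thesis
      using j code_block[of "block_one (f k) (f (Suc k))" f k]
      by (simp add: one_pos_def block_one_def block_len_def)
  next
    case (Suc j')
    then show ?thesis
      using j code_pair[of "of_bool (code f (Suc k) j)" f k j'] by (simp add: one_pos_def)
  qed
qed

lemma infinite_ones_code: "infinite {i. code f k i}"
  unfolding ones_code
  using strict_mono_one_pos strict_mono_imp_inj_on range_inj_infinite by blast

definition no_adjacent_ones :: "(nat \<Rightarrow> bool) \<Rightarrow> bool" where
  "no_adjacent_ones f \<longleftrightarrow> (\<forall>k. f k \<longrightarrow> \<not> f (Suc k))"

lemma rho_code:
  assumes "no_adjacent_ones f"
  shows "rho (code f k) = code f (Suc k)"
proof
  fix j
  have "rho (code f k) j \<longleftrightarrow> odd (one_pos f k j)"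
    unfolding rho_def ones_code enumerate_range_strict_mono[OF strict_mono_one_pos] ..
  also have "\<dots> \<longleftrightarrow> code f (Suc k) j"
    using assms by (cases j) (auto simp: one_pos_def block_one_def block_len_def code_0 no_adjacent_ones_def)
  finally show "rho (code f k) j = code f (Suc k) j" .
qed

lemma R_code:
  assumes "no_adjacent_ones f"
  shows "R (bin_val (code f k)) = bin_val (code f (Suc k))"
proof -
  have "bin_val (code f k) \<noteq> 0"
    using bin_val_pos[of "code f k" "one_pos f k 0"] ones_code by force
  then show ?thesis
    by (simp add: R_def beta_bin_val[OF infinite_ones_code] rho_code[OF assms])
qed

lemma R_power_code:
  assumes "no_adjacent_ones f"
  shows "(R ^^ k) (bin_val (code f 0)) = bin_val (code f k)"
  by (induction k) (simp_all add: R_code[OF assms])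

lemma code_cong:
  assumes "\<forall>i\<le>m. f (k + i) = g (k + i)" "p \<le> m"
  shows "code f k p = code g k p"
  using assms
proof (induction m arbitrary: k p)
  case 0
  then show ?case by (simp add: code_0)
next
  case (Suc m)
  have fk: "f k = g k" "f (Suc k) = g (Suc k)"
    using Suc.prems(1) by (auto dest: spec[of _ 0] spec[of _ 1])
  show ?case
  proof (cases "p < block_len (f k)")
    case True
    then show ?thesis using fk by (simp add: code_block)
  next
    case False
    define d where "d = p - block_len (f k)"
    have p: "p = block_len (f k) + 2 * (d div 2) + d mod 2" "p = block_len (g k) + 2 * (d div 2) + d mod 2"
      using False fk by (simp_all add: d_def)
    have "Suc (d div 2) \<le> m"
      using Suc.prems(2) p(1) by (simp add: block_len_def split: if_splits)
    moreover have "\<forall>i\<le>m. f (Suc k + i) = g (Suc k + i)"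
      using Suc.prems(1) by auto
    ultimately have "code f (Suc k) (Suc (d div 2)) = code g (Suc k) (Suc (d div 2))"
      using Suc.IH by blast
    then show ?thesis
      using p code_pair[of "d mod 2" f k "d div 2"] code_pair[of "d mod 2" g k "d div 2"] by simp
  qed
qed

lemma bin_val_code_ge_half: "f k \<Longrightarrow> 1/2 \<le> bin_val (code f k)"
  by (rule bin_val_ge_half) (simp add: code_0)

lemma bin_val_code_le_quarter: "\<not> f k \<Longrightarrow> bin_val (code f k) \<le> 1/4"
  by (rule bin_val_le_quarter) (simp_all add: code_0 code_block block_len_def block_one_def)

lemma dist_code_ge:
  "f k \<noteq> g k \<Longrightarrow> 1/4 \<le> \<bar>bin_val (code f k) - bin_val (code g k)\<bar>"
  using bin_val_code_ge_half[of f k] bin_val_code_le_quarter[of f k]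
    bin_val_code_ge_half[of g k] bin_val_code_le_quarter[of g k]
  by (cases "f k") auto

lemma dist_code_le:
  "\<forall>i\<le>j. f (k + i) = g (k + i) \<Longrightarrow> \<bar>bin_val (code f k) - bin_val (code g k)\<bar> \<le> 1 / 2 ^ Suc j"
  using code_cong[of j f k g] by (intro bin_val_dist_le) (simp add: less_Suc_eq_le)

section \<open>An uncountable scrambled set\<close>

definition in_stage :: "nat \<Rightarrow> nat \<Rightarrow> bool" where
  "in_stage m k \<longleftrightarrow> fact m \<le> k \<and> k < fact (Suc m)"

lemma in_stage_unique:
  assumes "in_stage m k" "in_stage m' k"
  shows "m = m'"
proof (rule ccontr)
  assume "m \<noteq> m'"
  then have "fact (Suc (min m m')) \<le> (fact (max m m') :: nat)"
    by (intro fact_mono_nat) auto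
  with assms show False
    by (auto simp: in_stage_def min_def max_def split: if_splits)
qed

lemma in_stage_Suc: "in_stage m k \<Longrightarrow> in_stage m (Suc k) \<or> in_stage (Suc m) (Suc k)"
  using fact_less_mono_nat[of "Suc m" "Suc (Suc m)"] by (auto simp: in_stage_def)

definition stage_bit :: "nat \<Rightarrow> nat" where
  "stage_bit m = fst (prod_decode (m div 2))"

lemma frequently_stage_bit: "\<exists>\<^sub>F m in sequentially. odd m \<and> stage_bit m = i"
  unfolding frequently_sequentially
proof
  fix N
  show "\<exists>m\<ge>N. odd m \<and> stage_bit m = i"
    using le_prod_encode_2[of N i]
    by (intro exI[of _ "2 * prod_encode (i, N) + 1"]) (simp add: stage_bit_def)
qed

lemma frequently_even: "\<exists>\<^sub>F m in sequentially. even m"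
  unfolding frequently_sequentially by (metis dvd_triv_left le_add2 mult_2)

definition pattern :: "(nat \<Rightarrow> bool) \<Rightarrow> nat \<Rightarrow> bool" where
  "pattern w k \<longleftrightarrow> (\<exists>m. in_stage m k \<and> odd m \<and> (even k \<longleftrightarrow> w (stage_bit m)))"

lemma pattern_in_stage:
  "in_stage m k \<Longrightarrow> pattern w k \<longleftrightarrow> odd m \<and> (even k \<longleftrightarrow> w (stage_bit m))"
  using in_stage_unique unfolding pattern_def by blast

lemma no_adjacent_ones_pattern: "no_adjacent_ones (pattern w)"
  unfolding no_adjacent_ones_def
proof (intro allI impI notI)
  fix k assume k: "pattern w k" "pattern w (Suc k)"
  then obtain m where m: "in_stage m k" "odd m" "even k \<longleftrightarrow> w (stage_bit m)"
    unfolding pattern_def by blast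
  from in_stage_Suc[OF m(1)] show False
    using k(2) m by (auto simp: pattern_in_stage)
qed

lemma uncountable_UNIV_nat_bool: "uncountable (UNIV :: (nat \<Rightarrow> bool) set)"
proof
  assume "countable (UNIV :: (nat \<Rightarrow> bool) set)"
  then have "countable (range (Collect :: (nat \<Rightarrow> bool) \<Rightarrow> nat set))"
    by (rule countable_image)
  also have "range (Collect :: (nat \<Rightarrow> bool) \<Rightarrow> nat set) = Pow UNIV"
    using surjI[of Collect "\<lambda>A x. x \<in> A"] by simp
  finally have "range (from_nat_into (Pow (UNIV :: nat set))) = Pow UNIV"
    by (intro range_from_nat_into) auto
  with Cantors_theorem show False by blast
qed

definition point :: "(nat \<Rightarrow> bool) \<Rightarrow> real" where
  "point w = bin_val (code (pattern w) 0)"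

lemma point_in_unit_interval: "point w \<in> {0..1}"
  by (simp add: point_def bin_val_nonneg bin_val_le_1)

lemma R_power_point: "(R ^^ k) (point w) = bin_val (code (pattern w) k)"
  unfolding point_def by (rule R_power_code[OF no_adjacent_ones_pattern])

lemma dist_R_power_point_even_stage:
  assumes "even m" "fact m \<le> k" "k + j < fact (Suc m)"
  shows "\<bar>(R ^^ k) (point w) - (R ^^ k) (point w')\<bar> \<le> 1 / 2 ^ Suc j"
proof -
  have "\<forall>i\<le>j. pattern w (k + i) = pattern w' (k + i)"
    using assms pattern_in_stage[of m] by (auto simp: in_stage_def)
  then show ?thesis
    unfolding R_power_point by (rule dist_code_le)
qed

lemma dist_R_power_point_odd_stage:
  assumes "odd m" "w (stage_bit m) \<noteq> w' (stage_bit m)" "in_stage m k"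
  shows "1/4 \<le> \<bar>(R ^^ k) (point w) - (R ^^ k) (point w')\<bar>"
  unfolding R_power_point
  by (rule dist_code_ge) (use assms pattern_in_stage[OF assms(3)] in auto)

lemma inj_point: "inj point"
proof (rule injI, rule ccontr)
  fix w w' assume "point w = point w'" "w \<noteq> w'"
  then obtain i where "w i \<noteq> w' i" by auto
  moreover obtain m where "odd m" "stage_bit m = i"
    using frequently_ex[OF frequently_stage_bit] by blast
  moreover have "in_stage m (fact m)"
    using fact_less_mono_nat[of m "Suc m"] \<open>odd m\<close> by (simp add: in_stage_def odd_pos)
  ultimately have "1/4 \<le> \<bar>(R ^^ fact m) (point w) - (R ^^ fact m) (point w')\<bar>"
    by (intro dist_R_power_point_odd_stage) auto
  with \<open>point w = point w'\<close> show False by simp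
qed

lemma limsup_density_close_orbits:
  assumes "0 < \<delta>"
  shows "limsup (\<lambda>n. ereal (real (card {k. k < n \<and> \<bar>(R ^^ k) (point w) - (R ^^ k) (point w')\<bar> < \<delta>}) / real n)) = 1"
proof -
  obtain j where "(1/2) ^ j < \<delta>"
    using real_arch_pow_inv[OF assms, of "1/2"] by auto
  moreover have "(1/2::real) ^ Suc j \<le> (1/2) ^ j"
    by (rule power_decreasing) simp_all
  ultimately have j: "1 / 2 ^ Suc j < \<delta>"
    unfolding power_one_over by linarith
  have "\<exists>\<^sub>F m in sequentially. fact (Suc m) \<le>
      card {k. k < fact (Suc m) \<and> \<bar>(R ^^ k) (point w) - (R ^^ k) (point w')\<bar> < \<delta>} + fact m + j"
    using frequently_even
  proof (rule frequently_elim1)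
    fix m :: nat assume "even m"
    show "fact (Suc m) \<le> card {k. k < fact (Suc m) \<and> \<bar>(R ^^ k) (point w) - (R ^^ k) (point w')\<bar> < \<delta>} + fact m + j"
      using dist_R_power_point_even_stage[OF \<open>even m\<close>] j
      by (intro card_filter_less_ge) (meson le_less_trans)
  qed
  then have "limsup (\<lambda>n. ereal (real (card {k. k < n \<and> \<bar>(R ^^ k) (point w) - (R ^^ k) (point w')\<bar> < \<delta>}) / real n)) = ereal 1"
    by (intro Limsup_ereal_eqI always_eventually allI density_le_1 frequently_density_gt)
  then show ?thesis
    by (simp add: one_ereal_def)
qed

lemma liminf_density_close_orbits:
  assumes "w i \<noteq> w' i"
  shows "liminf (\<lambda>n. ereal (real (card {k. k < n \<and> \<bar>(R ^^ k) (point w) - (R ^^ k) (point w')\<bar> < 1/4}) / real n)) = 0"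
proof -
  have "\<exists>\<^sub>F m in sequentially.
      card {k. k < fact (Suc m) \<and> \<bar>(R ^^ k) (point w) - (R ^^ k) (point w')\<bar> < 1/4} \<le> fact m"
    using frequently_stage_bit[of i]
  proof (rule frequently_elim1)
    fix m assume "odd m \<and> stage_bit m = i"
    then show "card {k. k < fact (Suc m) \<and> \<bar>(R ^^ k) (point w) - (R ^^ k) (point w')\<bar> < 1/4} \<le> fact m"
      using dist_R_power_point_odd_stage[of m w w'] assms
      by (intro card_filter_less_le) (auto simp: in_stage_def not_less)
  qed
  then have "liminf (\<lambda>n. ereal (real (card {k. k < n \<and> \<bar>(R ^^ k) (point w) - (R ^^ k) (point w')\<bar> < 1/4}) / real n)) = ereal 0"
    by (intro Liminf_ereal_eqI always_eventually allI frequently_density_lt) simp_all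
  then show ?thesis
    by (simp add: zero_ereal_def)
qed

theorem proposition6p10:
  shows "\<exists>S dbar. S \<subseteq> {0..1::real} \<and> uncountable S \<and> dbar > (0::real) \<and>
    (\<forall>x\<in>S. \<forall>y\<in>S. x \<noteq> y \<longrightarrow>
       (\<forall>\<delta>>0. limsup (\<lambda>n. ereal (real (card {k. k < n \<and> \<bar>(R ^^ k) x - (R ^^ k) y\<bar> < \<delta>}) / real n)) = 1)
     \<and> liminf (\<lambda>n. ereal (real (card {k. k < n \<and> \<bar>(R ^^ k) x - (R ^^ k) y\<bar> < dbar}) / real n)) = 0)"
proof (intro exI conjI ballI impI allI)
  show "range point \<subseteq> {0..1}"
    using point_in_unit_interval by blast
  show "uncountable (range point)"
    using uncountable_UNIV_nat_bool countable_image_inj_on[OF _ inj_point] by blast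
  show "(0::real) < 1/4"
    by simp
  fix x y assume "x \<in> range point" "y \<in> range point" "x \<noteq> y"
  then obtain w w' where xy: "x = point w" "y = point w'"
    by blast
  with \<open>x \<noteq> y\<close> have "w \<noteq> w'"
    by blast
  then obtain i where "w i \<noteq> w' i"
    by (auto simp: fun_eq_iff)
  then show "liminf (\<lambda>n. ereal (real (card {k. k < n \<and> \<bar>(R ^^ k) x - (R ^^ k) y\<bar> < 1/4}) / real n)) = 0"
    unfolding xy by (rule liminf_density_close_orbits)
  fix \<delta> :: real assume "0 < \<delta>"
  then show "limsup (\<lambda>n. ereal (real (card {k. k < n \<and> \<bar>(R ^^ k) x - (R ^^ k) y\<bar> < \<delta>}) / real n)) = 1"
    unfolding xy by (rule limsup_density_close_orbits)
qed

end
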